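(* For $i\in\{1,2\}$ let $G_i=(V_i,E_i)$ be finite connected graphs with $n_i=|V_i|\ge 2$, $V_1\cap V_2=\emptyset$, and let $u\in V_1$, $v\in V_2$. Let $G$ be the graph with vertex set $V_1\cup V_2$ and edge set $E_1\cup E_2\cup\{\{u,v\}\}$. Let $D_1,D_2,D_G$ be the distance matrices of $G_1,G_2,G$. Assume: (C2) $D_1$ and $D_2$ are invertible, and let $K_{G_i}=n_iD_i^{-1}\mathbf{1}_{n_i}$ be the Steinerberger curvature of $G_i$ and $k_i=\sum_{x\in V_i}K_{G_i}(x)$ its total curvature; (C1) $Z:=\big(2+\frac{k_1}{n_1}\big)\big(2+\frac{k_2}{n_2}\big)\neq 4$; (C3) $k_u:=K_{G_1}(u)\neq 0$ and $k_v:=K_{G_2}(v)\neq 0$. Then $D_G$ is invertible and the Steinerberger curvature $K_G=(n_1+n_2)D_G^{-1}\mathbf{1}_{n_1+n_2}$ of $G$ satisfies $$K_G(x)=\alpha K_{G_1}(x)\ \ (x\in V_1\setminus\{u\}),\qquad K_G(y)=\beta K_{G_2}(y)\ \ (y\in V_2\setminus\{v\}),$$ $$K_G(u)=\gamma k_u,\qquad K_G(v)=\delta k_v,$$ where $$\alpha=\frac{2(n_1+n_2)k_2}{n_1n_2(Z-4)},\quad \beta=\frac{2(n_1+n_2)k_1}{n_1n_2(Z-4)},\quad \gamma=\Big(1-\frac{k_1}{2k_u}\Big)\alpha,\quad \delta=\Big(1-\frac{k_2}{2k_v}\Big)\beta.$$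
   Context: All graphs are finite, simple, connected and undirected, with the combinatorial shortest-path distance $d$. For $G=(V,E)$ with $V=\{v_1,\dots,v_n\}$, let $D=(d(v_i,v_j))_{i,j=1}^n$ be its distance matrix and $\mathbf{1}_n\in\mathbb{R}^n$ the all-ones column vector. The Steinerberger curvature $K\in\mathbb{R}^n$ (written $K_i$ or $K(v_i)$) is defined as follows: if $DK=n\mathbf{1}_n$ has a unique solution, $K$ is that solution; if it has several solutions, $K$ is a solution for which $\min_i K_i$ is maximal; if it has no solution, $K=nD^\dagger\mathbf{1}_n$ with $D^\dagger$ the Moore–Penrose pseudoinverse. The total curvature of a vertex subset $W$ is $K(W)=\sum_{w\in W}K(w)$. *)

theory Defs
  imports "HOL-Analysis.Analysis"
begin

definition is_walk :: "('v \<Rightarrow> 'v \<Rightarrow> bool) \<Rightarrow> 'v list \<Rightarrow> bool" where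
  "is_walk E xs \<longleftrightarrow> xs \<noteq> [] \<and> (\<forall>i. Suc i < length xs \<longrightarrow> E (xs ! i) (xs ! Suc i))"

definition simple_graph :: "('v \<Rightarrow> 'v \<Rightarrow> bool) \<Rightarrow> bool" where
  "simple_graph E \<longleftrightarrow> (\<forall>x y. E x y \<longrightarrow> E y x) \<and> (\<forall>x. \<not> E x x)"

definition graph_connected :: "('v \<Rightarrow> 'v \<Rightarrow> bool) \<Rightarrow> bool" where
  "graph_connected E \<longleftrightarrow>
     (\<forall>x y. \<exists>xs. is_walk E xs \<and> hd xs = x \<and> last xs = y)"

definition graph_dist :: "('v \<Rightarrow> 'v \<Rightarrow> bool) \<Rightarrow> 'v \<Rightarrow> 'v \<Rightarrow> nat" where
  "graph_dist E x y =
     (LEAST n. \<exists>xs. is_walk E xs \<and> hd xs = x \<and> last xs = y \<and> length xs = Suc n)"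

definition dist_matrix :: "('v::finite \<Rightarrow> 'v \<Rightarrow> bool) \<Rightarrow> real^'v^'v" where
  "dist_matrix E = (\<chi> i j. real (graph_dist E i j))"

text \<open>Steinerberger curvature in the case of an invertible distance matrix:
  the unique solution of D K = n 1, i.e. n D^{-1} 1.\<close>
definition curv_inv :: "real^'v^'v \<Rightarrow> real^'v::finite" where
  "curv_inv D = real CARD('v) *\<^sub>R (matrix_inv D *v (1::real^'v))"

text \<open>Bridge graph: disjoint union of G1 (on 'a) and G2 (on 'b) plus the edge {u,v}.\<close>
definition bridge_edges ::
  "('a \<Rightarrow> 'a \<Rightarrow> bool) \<Rightarrow> ('b \<Rightarrow> 'b \<Rightarrow> bool) \<Rightarrow> 'a \<Rightarrow> 'b \<Rightarrow> ('a + 'b) \<Rightarrow> ('a + 'b) \<Rightarrow> bool" where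
  "bridge_edges E1 E2 u v x y =
     (case (x, y) of
        (Inl a, Inl b) \<Rightarrow> E1 a b
      | (Inr a, Inr b) \<Rightarrow> E2 a b
      | (Inl a, Inr b) \<Rightarrow> a = u \<and> b = v
      | (Inr a, Inl b) \<Rightarrow> b = u \<and> a = v)"

end

theory Submission
  imports Defs
begin

text \<open>Every path across the bridge uses the edge \<open>{u, v}\<close>, so the distance matrix of \<open>G\<close>
  consists of the blocks \<open>D\<^sub>1\<close>, \<open>D\<^sub>2\<close> and the cross blocks \<open>d\<^sub>1(x, u) + 1 + d\<^sub>2(v, y)\<close>.
  On \<open>V\<^sub>1\<close> the equation \<open>D w = c\<close> therefore reads \<open>D\<^sub>1 w\<^sub>1 + S (D\<^sub>1 e\<^sub>u + 1) + T 1 = c\<close>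
  with two scalars \<open>S, T\<close> depending only on \<open>w\<^sub>2\<close>. Since \<open>D\<^sub>1 e\<^sub>u\<close> is a column of \<open>D\<^sub>1\<close> and
  \<open>D\<^sub>1 K\<^sub>1 = n\<^sub>1 1\<close>, invertibility of \<open>D\<^sub>1\<close> puts \<open>w\<^sub>1\<close> into the span of \<open>e\<^sub>u\<close> and \<open>K\<^sub>1\<close>,
  and symmetrically on \<open>V\<^sub>2\<close>. For the kernel of \<open>D\<close> this leaves a homogeneous
  \<open>2 \<times> 2\<close> system with determinant \<open>Z - 4\<close>; for the curvature the ansatz
  \<open>\<alpha> K\<^sub>1 - c e\<^sub>u\<close>, \<open>\<beta> K\<^sub>2 - c' e\<^sub>v\<close> is solved explicitly.\<close>

lemma is_walk_singleton [simp]: "is_walk E [x]"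
  by (simp add: is_walk_def)

lemma is_walk_Cons_Cons [simp]:
  "is_walk E (x # y # xs) \<longleftrightarrow> E x y \<and> is_walk E (y # xs)"
  by (auto simp: is_walk_def nth_Cons split: nat.splits)

lemma is_walk_Nil [simp]: "\<not> is_walk E []"
  by (simp add: is_walk_def)

lemma is_walk_not_Nil: "is_walk E xs \<Longrightarrow> xs \<noteq> []"
  by auto

lemma is_walk_append:
  assumes "is_walk E xs" "is_walk E ys" "E (last xs) (hd ys)"
  shows "is_walk E (xs @ ys)"
  using assms
proof (induction xs rule: induct_list012)
  case (2 x)
  then show ?case by (cases ys) auto
qed auto

lemma is_walk_map:
  assumes "is_walk E xs" "\<And>a b. E a b \<Longrightarrow> E' (f a) (f b)"
  shows "is_walk E' (map f xs)"
  using assms by (auto simp: is_walk_def)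

lemma walk_potential_le:
  fixes \<phi> :: "'v \<Rightarrow> nat"
  assumes "is_walk E xs" "\<And>a b. E a b \<Longrightarrow> \<phi> b \<le> \<phi> a + 1"
  shows "\<phi> (last xs) \<le> \<phi> (hd xs) + (length xs - 1)"
  using assms(1)
proof (induction xs rule: induct_list012)
  case (3 x y zs)
  then show ?case using assms(2)[of x y] by auto
qed auto

lemma graph_dist_eqI:
  fixes \<phi> :: "'v \<Rightarrow> nat"
  assumes "is_walk E xs" "hd xs = x" "last xs = y" "length xs = Suc d"
    and "\<And>a b. E a b \<Longrightarrow> \<phi> b \<le> \<phi> a + 1" "\<phi> x = 0" "\<phi> y = d"
  shows "graph_dist E x y = d"
  unfolding graph_dist_def
proof (rule Least_equality)
  show "\<exists>xs. is_walk E xs \<and> hd xs = x \<and> last xs = y \<and> length xs = Suc d"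
    using assms by blast
next
  fix m assume "\<exists>xs. is_walk E xs \<and> hd xs = x \<and> last xs = y \<and> length xs = Suc m"
  then obtain ys where "is_walk E ys" "hd ys = x" "last ys = y" "length ys = Suc m"
    by blast
  with walk_potential_le[of E ys \<phi>] assms(5-7) show "d \<le> m"
    by simp
qed

lemma shortest_walk_exists:
  assumes "graph_connected E"
  obtains xs where "is_walk E xs" "hd xs = x" "last xs = y" "length xs = Suc (graph_dist E x y)"
proof -
  obtain xs where xs: "is_walk E xs" "hd xs = x" "last xs = y"
    using assms by (auto simp: graph_connected_def)
  then have "\<exists>n xs. is_walk E xs \<and> hd xs = x \<and> last xs = y \<and> length xs = Suc n"
    using is_walk_not_Nil[OF xs(1)] by (intro exI[of _ "length xs - 1"] exI[of _ xs]) simp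
  then have "\<exists>xs. is_walk E xs \<and> hd xs = x \<and> last xs = y \<and> length xs = Suc (graph_dist E x y)"
    unfolding graph_dist_def by (rule LeastI_ex)
  then show ?thesis
    using that by blast
qed

lemma graph_dist_self [simp]: "graph_dist E x x = 0"
  unfolding graph_dist_def
  by (rule Least_equality) (auto intro!: exI[of _ "[x]"])

lemma graph_dist_edge_le:
  assumes "graph_connected E" "E a b"
  shows "graph_dist E x b \<le> graph_dist E x a + 1"
proof -
  obtain xs where xs: "is_walk E xs" "hd xs = x" "last xs = a" "length xs = Suc (graph_dist E x a)"
    using shortest_walk_exists[OF assms(1)] .
  have "is_walk E (xs @ [b]) \<and> hd (xs @ [b]) = x \<and> last (xs @ [b]) = b
        \<and> length (xs @ [b]) = Suc (graph_dist E x a + 1)"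
    using xs assms(2) is_walk_not_Nil[OF xs(1)] by (simp add: is_walk_append)
  then show ?thesis
    unfolding graph_dist_def by (intro Least_le) blast
qed

lemma graph_dist_iso:
  assumes "bij f" "\<And>a b. E' (f a) (f b) \<longleftrightarrow> E a b"
  shows "graph_dist E' (f x) (f y) = graph_dist E x y"
proof -
  have walk_map: "is_walk E' (map f xs) \<longleftrightarrow> is_walk E xs" for xs
    by (simp add: is_walk_def assms(2))
  have ends: "hd (map f xs) = f x \<longleftrightarrow> hd xs = x" "last (map f xs) = f y \<longleftrightarrow> last xs = y"
    if "xs \<noteq> []" for xs
    using that bij_is_inj[OF assms(1)] by (simp_all add: hd_map last_map inj_eq)
  have lists: "(\<exists>ys. P ys) \<longleftrightarrow> (\<exists>xs. P (map f xs))" for P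
    by (metis assms(1) bij_is_surj surj_iff list.map_comp list.map_id)
  show ?thesis
    unfolding graph_dist_def lists
    by (rule arg_cong[of _ _ Least], rule ext) (metis ends walk_map length_map is_walk_Nil)
qed

lemma graph_dist_bridge_Inl:
  fixes E1 :: "'a \<Rightarrow> 'a \<Rightarrow> bool" and E2 :: "'b \<Rightarrow> 'b \<Rightarrow> bool"
  assumes c1: "graph_connected E1" and c2: "graph_connected E2"
  shows "graph_dist (bridge_edges E1 E2 u v) (Inl x) (Inl a) = graph_dist E1 x a"
    and "graph_dist (bridge_edges E1 E2 u v) (Inl x) (Inr b) = graph_dist E1 x u + 1 + graph_dist E2 v b"
proof -
  let ?B = "bridge_edges E1 E2 u v"
  define \<phi> where "\<phi> = case_sum (graph_dist E1 x) (\<lambda>b. graph_dist E1 x u + 1 + graph_dist E2 v b)"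
  have \<phi>_edge: "\<phi> z' \<le> \<phi> z + 1" if "?B z z'" for z z'
    using that graph_dist_edge_le[OF c1] graph_dist_edge_le[OF c2]
    by (cases z; cases z') (auto simp: \<phi>_def bridge_edges_def)
  have walk_Inl: "is_walk ?B (map Inl xs)" if "is_walk E1 xs" for xs
    using that by (rule is_walk_map) (simp add: bridge_edges_def)
  have walk_Inr: "is_walk ?B (map Inr xs)" if "is_walk E2 xs" for xs
    using that by (rule is_walk_map) (simp add: bridge_edges_def)
  obtain xs where xs: "is_walk E1 xs" "hd xs = x" "last xs = a" "length xs = Suc (graph_dist E1 x a)"
    using shortest_walk_exists[OF c1] .
  show "graph_dist ?B (Inl x) (Inl a) = graph_dist E1 x a"
    using xs is_walk_not_Nil[OF xs(1)]
    by (intro graph_dist_eqI[OF walk_Inl[OF xs(1)] _ _ _ \<phi>_edge])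
       (auto simp: \<phi>_def hd_map last_map)
  obtain ys where ys: "is_walk E1 ys" "hd ys = x" "last ys = u" "length ys = Suc (graph_dist E1 x u)"
    using shortest_walk_exists[OF c1] .
  obtain zs where zs: "is_walk E2 zs" "hd zs = v" "last zs = b" "length zs = Suc (graph_dist E2 v b)"
    using shortest_walk_exists[OF c2] .
  have ne: "ys \<noteq> []" "zs \<noteq> []"
    using ys(1) zs(1) by (auto dest: is_walk_not_Nil)
  have "is_walk ?B (map Inl ys @ map Inr zs)"
    using ne ys(3) zs(2)
    by (intro is_walk_append walk_Inl[OF ys(1)] walk_Inr[OF zs(1)])
       (simp add: last_map hd_map bridge_edges_def)
  then show "graph_dist ?B (Inl x) (Inr b) = graph_dist E1 x u + 1 + graph_dist E2 v b"
    using ne ys zs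
    by (intro graph_dist_eqI[OF _ _ _ _ \<phi>_edge]) (auto simp: \<phi>_def hd_map last_map)
qed

lemma graph_dist_bridge_Inr:
  fixes E1 :: "'a \<Rightarrow> 'a \<Rightarrow> bool" and E2 :: "'b \<Rightarrow> 'b \<Rightarrow> bool"
  assumes "graph_connected E1" "graph_connected E2"
  shows "graph_dist (bridge_edges E1 E2 u v) (Inr y) (Inr b) = graph_dist E2 y b"
    and "graph_dist (bridge_edges E1 E2 u v) (Inr y) (Inl a) = graph_dist E2 y v + 1 + graph_dist E1 u a"
proof -
  let ?swap = "case_sum Inr Inl :: 'b + 'a \<Rightarrow> 'a + 'b"
  have "bij ?swap"
    by (rule o_bij[of "case_sum Inr Inl"]) (auto simp: fun_eq_iff split: sum.split)
  moreover have
    "bridge_edges E1 E2 u v (?swap z) (?swap z') \<longleftrightarrow> bridge_edges E2 E1 v u z z'" for z z'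
    by (cases z; cases z') (auto simp: bridge_edges_def)
  ultimately have "graph_dist (bridge_edges E1 E2 u v) (?swap z) (?swap z')
      = graph_dist (bridge_edges E2 E1 v u) z z'" for z z'
    by (rule graph_dist_iso)
  from this[of "Inl y" "Inl b"] this[of "Inl y" "Inr a"] show
    "graph_dist (bridge_edges E1 E2 u v) (Inr y) (Inr b) = graph_dist E2 y b"
    "graph_dist (bridge_edges E1 E2 u v) (Inr y) (Inl a) = graph_dist E2 y v + 1 + graph_dist E1 u a"
    using graph_dist_bridge_Inl[OF assms(2,1)] by simp_all
qed

definition bridge_matrix ::
  "real^'a::finite^'a \<Rightarrow> real^'b::finite^'b \<Rightarrow> 'a \<Rightarrow> 'b \<Rightarrow> real^('a + 'b)^('a + 'b)" where
  "bridge_matrix A B u v = (\<chi> z z'. case (z, z') of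
      (Inl x, Inl a) \<Rightarrow> A $ x $ a
    | (Inr y, Inr b) \<Rightarrow> B $ y $ b
    | (Inl x, Inr b) \<Rightarrow> A $ x $ u + 1 + B $ v $ b
    | (Inr y, Inl a) \<Rightarrow> B $ y $ v + 1 + A $ u $ a)"

lemma dist_matrix_bridge_edges:
  assumes "graph_connected E1" "graph_connected E2"
  shows "dist_matrix (bridge_edges E1 E2 u v) = bridge_matrix (dist_matrix E1) (dist_matrix E2) u v"
  unfolding vec_eq_iff dist_matrix_def bridge_matrix_def
  by (auto split: sum.split simp: graph_dist_bridge_Inl[OF assms] graph_dist_bridge_Inr[OF assms])

lemma matrix_inv_right:
  assumes "invertible D"
  shows "D ** matrix_inv D = mat 1"
  using assms unfolding invertible_def matrix_inv_def by (metis (mono_tags, lifting) someI_ex)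

lemma mult_curv_inv:
  fixes D :: "real^'n::finite^'n"
  assumes "invertible D"
  shows "D *v curv_inv D = real CARD('n) *\<^sub>R 1"
  by (simp add: curv_inv_def matrix_vector_mult_scaleR matrix_vector_mul_assoc
      matrix_inv_right[OF assms])

lemma curv_inv_unique:
  fixes D :: "real^'n::finite^'n"
  assumes "invertible D" "D *v w = real CARD('n) *\<^sub>R 1"
  shows "curv_inv D = w"
  using inj_matrix_vector_mult[OF assms(1)] mult_curv_inv[OF assms(1)] assms(2)
  by (metis injD)

lemma sum_UNIV_Plus:
  fixes h :: "'a::finite + 'b::finite \<Rightarrow> 'c::comm_monoid_add"
  shows "(\<Sum>z\<in>UNIV. h z) = (\<Sum>a\<in>UNIV. h (Inl a)) + (\<Sum>b\<in>UNIV. h (Inr b))"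
  using sum.Plus[of "UNIV::'a set" "UNIV::'b set" h] by (simp add: UNIV_Plus_UNIV comp_def)

lemma bridge_matrix_mult_Inl:
  "(bridge_matrix A B u v *v w) $ Inl x
     = (A *v (\<chi> a. w $ Inl a)) $ x + (A $ x $ u + 1) * (\<Sum>b\<in>UNIV. w $ Inr b)
       + (B *v (\<chi> b. w $ Inr b)) $ v"
  by (simp add: matrix_vector_mult_def bridge_matrix_def sum_UNIV_Plus
      sum.distrib sum_distrib_left distrib_right)

lemma bridge_matrix_mult_Inr:
  "(bridge_matrix A B u v *v w) $ Inr y
     = (B *v (\<chi> b. w $ Inr b)) $ y + (B $ y $ v + 1) * (\<Sum>a\<in>UNIV. w $ Inl a)
       + (A *v (\<chi> a. w $ Inl a)) $ u"
  by (simp add: matrix_vector_mult_def bridge_matrix_def sum_UNIV_Plus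
      sum.distrib sum_distrib_left distrib_right)

lemma bridge_block_solution:
  fixes A :: "real^'a::finite^'a"
  assumes "invertible A" "\<And>x. (A *v f) $ x + (A $ x $ u + 1) * S + T = 0"
  shows "f = - S *\<^sub>R axis u 1 - ((S + T) / CARD('a)) *\<^sub>R curv_inv A"
proof -
  let ?g = "f + S *\<^sub>R axis u 1 + ((S + T) / CARD('a)) *\<^sub>R curv_inv A"
  have "A *v ?g = A *v f + S *\<^sub>R column u A + ((S + T) / CARD('a)) *\<^sub>R (A *v curv_inv A)"
    by (simp add: matrix_vector_right_distrib matrix_vector_mult_scaleR matrix_vector_mult_basis)
  also have "\<dots> = A *v f + S *\<^sub>R column u A + (S + T) *\<^sub>R 1"
    by (simp add: mult_curv_inv[OF assms(1)])
  also have "\<dots> = 0"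
    using assms(2) by (simp add: vec_eq_iff column_def algebra_simps)
  finally have "?g = 0"
    using inj_matrix_vector_mult[OF assms(1)] by (metis injD matrix_vector_mult_0_right)
  then show ?thesis
    by (simp add: algebra_simps eq_neg_iff_add_eq_0)
qed

lemma sum_bridge_block_solution:
  fixes A :: "real^'a::finite^'a"
  assumes "invertible A" "\<And>x. (A *v f) $ x + (A $ x $ u + 1) * S + T = 0"
  shows "(\<Sum>a\<in>UNIV. f $ a) = - S - (\<Sum>a\<in>UNIV. curv_inv A $ a) / CARD('a) * (S + T)"
proof -
  have "(\<Sum>a\<in>UNIV. f $ a)
        = - S * (\<Sum>a\<in>UNIV. axis u 1 $ a) - (S + T) / CARD('a) * (\<Sum>a\<in>UNIV. curv_inv A $ a)"
    by (subst bridge_block_solution[OF assms]) (simp add: sum_subtractf sum_distrib_left)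
  then show ?thesis
    by (simp add: axis_def)
qed

lemma homogeneous_2x2_trivial:
  fixes a b c d x y :: "'a::field"
  assumes "a * d \<noteq> b * c" "a * x + b * y = 0" "c * x + d * y = 0"
  shows "x = 0" "y = 0"
proof -
  have "(a * d - b * c) * x = d * (a * x + b * y) - b * (c * x + d * y)"
    by (simp add: algebra_simps)
  then have "(a * d - b * c) * x = 0"
    using assms(2,3) by simp
  then show "x = 0"
    using assms(1) by simp
  have "(a * d - b * c) * y = a * (c * x + d * y) - c * (a * x + b * y)"
    by (simp add: algebra_simps)
  then have "(a * d - b * c) * y = 0"
    using assms(2,3) by simp
  then show "y = 0"
    using assms(1) by simp
qed

lemma bridge_sums_vanish:
  fixes S1 S2 T1 T2 r1 r2 :: real
  assumes "T1 = - (S2 + T2)" "T2 = - (S1 + T1)"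
    and "S1 = - S2 - r1 * (S2 + T2)" "S2 = - S1 - r2 * (S1 + T1)"
    and "(2 + r1) * (2 + r2) \<noteq> 4"
  shows "S1 + T1 = 0" "S2 + T2 = 0"
proof -
  have "2 * 2 \<noteq> (2 + r1) * (2 + r2)"
    using assms(5) by simp
  moreover have "2 * (S1 + T1) + (2 + r1) * (S2 + T2) = 0"
    and "(2 + r2) * (S1 + T1) + 2 * (S2 + T2) = 0"
    using assms(1-4) by algebra+
  ultimately show "S1 + T1 = 0" "S2 + T2 = 0"
    by (rule homogeneous_2x2_trivial)+
qed

lemma bridge_matrix_ker:
  fixes A :: "real^'a::finite^'a" and B :: "real^'b::finite^'b" and n1 n2 k1 k2 :: real
  assumes inv: "invertible A" "invertible B" and diag: "A $ u $ u = 0" "B $ v $ v = 0"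
    and n_def: "n1 = real CARD('a)" "n2 = real CARD('b)"
    and k_def: "k1 = (\<Sum>a\<in>UNIV. curv_inv A $ a)" "k2 = (\<Sum>b\<in>UNIV. curv_inv B $ b)"
    and Z_ne_4: "(2 + k1 / n1) * (2 + k2 / n2) \<noteq> 4"
    and ker: "bridge_matrix A B u v *v w = 0"
  shows "w = 0"
proof -
  define f where "f = (\<chi> a. w $ Inl a)"
  define g where "g = (\<chi> b. w $ Inr b)"
  define S1 where "S1 = (\<Sum>a\<in>UNIV. f $ a)"
  define T1 where "T1 = (A *v f) $ u"
  define S2 where "S2 = (\<Sum>b\<in>UNIV. g $ b)"
  define T2 where "T2 = (B *v g) $ v"
  have row_Inl: "(A *v f) $ x + (A $ x $ u + 1) * S2 + T2 = 0" for x
    using bridge_matrix_mult_Inl[of A B u v w x] ker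
    by (simp add: f_def g_def S2_def T2_def)
  have row_Inr: "(B *v g) $ y + (B $ y $ v + 1) * S1 + T1 = 0" for y
    using bridge_matrix_mult_Inr[of A B u v w y] ker
    by (simp add: f_def g_def S1_def T1_def)
  have T1: "T1 = - (S2 + T2)" and T2: "T2 = - (S1 + T1)"
    using row_Inl[of u] row_Inr[of v] diag by (simp_all add: T1_def T2_def)
  have S1: "S1 = - S2 - k1 / n1 * (S2 + T2)"
    using sum_bridge_block_solution[OF inv(1) row_Inl] by (simp add: S1_def k_def(1) n_def(1))
  have S2: "S2 = - S1 - k2 / n2 * (S1 + T1)"
    using sum_bridge_block_solution[OF inv(2) row_Inr] by (simp add: S2_def k_def(2) n_def(2))
  have "S1 + T1 = 0" "S2 + T2 = 0"
    using bridge_sums_vanish[OF T1 T2 S1 S2 Z_ne_4] by simp_all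
  moreover have "S1 = 0" "S2 = 0"
    using calculation T1 T2 by linarith+
  ultimately have "f = 0" "g = 0"
    using bridge_block_solution[OF inv(1) row_Inl] bridge_block_solution[OF inv(2) row_Inr]
    by simp_all
  then show "w = 0"
    unfolding f_def g_def vec_eq_iff by (metis sum.exhaust zero_index vec_lambda_beta)
qed

lemma invertible_bridge_matrix:
  fixes A :: "real^'a::finite^'a" and B :: "real^'b::finite^'b" and n1 n2 k1 k2 :: real
  assumes "invertible A" "invertible B" "A $ u $ u = 0" "B $ v $ v = 0"
    and "n1 = real CARD('a)" "n2 = real CARD('b)"
    and "k1 = (\<Sum>a\<in>UNIV. curv_inv A $ a)" "k2 = (\<Sum>b\<in>UNIV. curv_inv B $ b)"
    and "(2 + k1 / n1) * (2 + k2 / n2) \<noteq> 4"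
  shows "invertible (bridge_matrix A B u v)"
  unfolding invertible_left_inverse matrix_left_invertible_ker
  using bridge_matrix_ker[OF assms] by blast

lemma bridge_coefficients:
  fixes n1 n2 k1 k2 Z \<alpha> \<beta> :: real
  assumes Z_def: "Z = (2 + k1 / n1) * (2 + k2 / n2)"
    and \<alpha>_def: "\<alpha> = 2 * (n1 + n2) * k2 / (n1 * n2 * (Z - 4))"
    and \<beta>_def: "\<beta> = 2 * (n1 + n2) * k1 / (n1 * n2 * (Z - 4))"
    and "n1 > 0" "n2 > 0" "Z \<noteq> 4"
  shows "\<alpha> * k1 = \<beta> * k2" "\<alpha> * n1 + \<beta> * k2 / 2 + \<beta> * n2 = n1 + n2"
proof -
  define N where "N = n1 * n2 * (Z - 4)"
  have N_eq: "N = 2 * k2 * n1 + 2 * k1 * n2 + k1 * k2"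
    using assms(4,5) by (simp add: N_def Z_def field_simps)
  have "N \<noteq> 0"
    using assms(4-6) by (simp add: N_def)
  then have \<alpha>N: "\<alpha> * N = 2 * (n1 + n2) * k2" and \<beta>N: "\<beta> * N = 2 * (n1 + n2) * k1"
    by (simp_all add: \<alpha>_def \<beta>_def N_def)
  have "\<alpha> * k1 * N = \<beta> * k2 * N"
    using \<alpha>N \<beta>N by (metis mult.commute mult.left_commute)
  then show "\<alpha> * k1 = \<beta> * k2"
    using \<open>N \<noteq> 0\<close> by simp
  have "(\<alpha> * n1 + \<beta> * k2 / 2 + \<beta> * n2) * N = n1 * (\<alpha> * N) + (k2 / 2 + n2) * (\<beta> * N)"
    by (simp add: algebra_simps)
  also have "\<dots> = (n1 + n2) * N"
    unfolding \<alpha>N \<beta>N by (simp add: N_eq algebra_simps)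
  finally show "\<alpha> * n1 + \<beta> * k2 / 2 + \<beta> * n2 = n1 + n2"
    using \<open>N \<noteq> 0\<close> by simp
qed

lemma mult_curv_inv_minus_axis:
  fixes A :: "real^'a::finite^'a"
  assumes "invertible A"
  shows "(A *v (c *\<^sub>R curv_inv A - e *\<^sub>R axis u 1)) $ x = c * CARD('a) - e * A $ x $ u"
  by (simp add: matrix_vector_mult_diff_distrib matrix_vector_mult_scaleR mult_curv_inv[OF assms]
      matrix_vector_mult_basis column_def)

lemma sum_curv_inv_minus_axis:
  "(\<Sum>a\<in>UNIV. (c *\<^sub>R curv_inv A - e *\<^sub>R axis u 1) $ a) = c * (\<Sum>a\<in>UNIV. curv_inv A $ a) - e"
  by (simp add: sum_subtractf sum_distrib_left axis_def if_distrib[of "(*) e"] cong: if_cong)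

lemma curv_inv_bridge_matrix:
  fixes A :: "real^'a::finite^'a" and B :: "real^'b::finite^'b" and n1 n2 k1 k2 Z \<alpha> \<beta> :: real
  assumes inv: "invertible A" "invertible B" and diag: "A $ u $ u = 0" "B $ v $ v = 0"
    and n_def: "n1 = real CARD('a)" "n2 = real CARD('b)"
    and k_def: "k1 = (\<Sum>a\<in>UNIV. curv_inv A $ a)" "k2 = (\<Sum>b\<in>UNIV. curv_inv B $ b)"
    and Z_def: "Z = (2 + k1 / n1) * (2 + k2 / n2)" and Z_ne_4: "Z \<noteq> 4"
    and \<alpha>_def: "\<alpha> = 2 * (n1 + n2) * k2 / (n1 * n2 * (Z - 4))"
    and \<beta>_def: "\<beta> = 2 * (n1 + n2) * k1 / (n1 * n2 * (Z - 4))"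
  shows "curv_inv (bridge_matrix A B u v) = (\<chi> z. case z of
            Inl a \<Rightarrow> \<alpha> * curv_inv A $ a - (if a = u then \<alpha> * k1 / 2 else 0)
          | Inr b \<Rightarrow> \<beta> * curv_inv B $ b - (if b = v then \<beta> * k2 / 2 else 0))"
    (is "_ = ?K")
proof (rule curv_inv_unique)
  show "invertible (bridge_matrix A B u v)"
    using invertible_bridge_matrix[OF inv diag n_def k_def] Z_def Z_ne_4 by simp
  have coeff: "\<alpha> * k1 = \<beta> * k2" "\<alpha> * n1 + \<beta> * k2 / 2 + \<beta> * n2 = n1 + n2"
    using bridge_coefficients[OF Z_def \<alpha>_def \<beta>_def _ _ Z_ne_4] by (simp_all add: n_def)
  have Inl_part: "?K $ Inl a = (\<alpha> *\<^sub>R curv_inv A - (\<alpha> * k1 / 2) *\<^sub>R axis u 1) $ a"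
   and Inr_part: "?K $ Inr b = (\<beta> *\<^sub>R curv_inv B - (\<beta> * k2 / 2) *\<^sub>R axis v 1) $ b" for a b
    by (simp_all add: axis_def)
  have "(bridge_matrix A B u v *v ?K) $ z = n1 + n2" for z
  proof (cases z)
    case (Inl x)
    have "(bridge_matrix A B u v *v ?K) $ z
          = (\<alpha> * n1 - \<alpha> * k1 / 2 * A $ x $ u) + (A $ x $ u + 1) * (\<beta> * k2 - \<beta> * k2 / 2)
            + \<beta> * n2"
      unfolding Inl bridge_matrix_mult_Inl Inl_part Inr_part vec_lambda_eta sum_curv_inv_minus_axis
        mult_curv_inv_minus_axis[OF inv(1)] mult_curv_inv_minus_axis[OF inv(2)]
      using diag(2) by (simp add: n_def k_def(2))
    also have "\<dots> = \<alpha> * n1 + \<beta> * k2 / 2 + \<beta> * n2"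
      using coeff(1) by (simp add: algebra_simps)
    finally show ?thesis
      using coeff(2) by simp
  next
    case (Inr y)
    have "(bridge_matrix A B u v *v ?K) $ z
          = (\<beta> * n2 - \<beta> * k2 / 2 * B $ y $ v) + (B $ y $ v + 1) * (\<alpha> * k1 - \<alpha> * k1 / 2)
            + \<alpha> * n1"
      unfolding Inr bridge_matrix_mult_Inr Inl_part Inr_part vec_lambda_eta sum_curv_inv_minus_axis
        mult_curv_inv_minus_axis[OF inv(1)] mult_curv_inv_minus_axis[OF inv(2)]
      using diag(1) by (simp add: n_def k_def(1))
    also have "\<dots> = \<alpha> * n1 + \<beta> * k2 / 2 + \<beta> * n2"
      using coeff(1) by (simp add: algebra_simps)
    finally show ?thesis
      using coeff(2) by simp
  qed
  then show "bridge_matrix A B u v *v ?K = real CARD('a + 'b) *\<^sub>R 1"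
    by (simp add: vec_eq_iff n_def card_Plus flip: UNIV_Plus_UNIV)
qed

theorem mainTheorem5:
  fixes E1 :: "'a::finite \<Rightarrow> 'a \<Rightarrow> bool" and E2 :: "'b::finite \<Rightarrow> 'b \<Rightarrow> bool"
    and u :: 'a and v :: 'b
    and n1 n2 k1 k2 Z ku kv :: real and K1 :: "real^'a" and K2 :: "real^'b"
  assumes n_def: "n1 = real CARD('a)" "n2 = real CARD('b)"
    and K_def: "K1 = curv_inv (dist_matrix E1)" "K2 = curv_inv (dist_matrix E2)"
    and k_def: "k1 = (\<Sum>x\<in>UNIV. K1 $ x)" "k2 = (\<Sum>y\<in>UNIV. K2 $ y)"
    and Z_def: "Z = (2 + k1 / n1) * (2 + k2 / n2)"
    and kuv_def: "ku = K1 $ u" "kv = K2 $ v"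
    and G1: "simple_graph E1" "graph_connected E1" "CARD('a) \<ge> 2"
    and G2: "simple_graph E2" "graph_connected E2" "CARD('b) \<ge> 2"
    and C2: "invertible (dist_matrix E1)" "invertible (dist_matrix E2)"
    and C1: "Z \<noteq> 4"
    and C3: "ku \<noteq> 0" "kv \<noteq> 0"
  shows "let D = dist_matrix (bridge_edges E1 E2 u v); K = curv_inv D;
             \<alpha> = 2 * (n1 + n2) * k2 / (n1 * n2 * (Z - 4));
             \<beta> = 2 * (n1 + n2) * k1 / (n1 * n2 * (Z - 4));
             \<gamma> = (1 - k1 / (2 * ku)) * \<alpha>;
             \<delta> = (1 - k2 / (2 * kv)) * \<beta>
         in invertible D
            \<and> (\<forall>x. x \<noteq> u \<longrightarrow> K $ Inl x = \<alpha> * K1 $ x)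
            \<and> (\<forall>y. y \<noteq> v \<longrightarrow> K $ Inr y = \<beta> * K2 $ y)
            \<and> K $ Inl u = \<gamma> * ku
            \<and> K $ Inr v = \<delta> * kv"
proof -
  define \<alpha> where "\<alpha> = 2 * (n1 + n2) * k2 / (n1 * n2 * (Z - 4))"
  define \<beta> where "\<beta> = 2 * (n1 + n2) * k1 / (n1 * n2 * (Z - 4))"
  have D: "dist_matrix (bridge_edges E1 E2 u v) = bridge_matrix (dist_matrix E1) (dist_matrix E2) u v"
    using dist_matrix_bridge_edges[OF G1(2) G2(2)] .
  have diag: "dist_matrix E1 $ u $ u = 0" "dist_matrix E2 $ v $ v = 0"
    by (simp_all add: dist_matrix_def)
  have inv: "invertible (dist_matrix (bridge_edges E1 E2 u v))"
    using invertible_bridge_matrix[OF C2 diag n_def k_def[unfolded K_def] C1[unfolded Z_def]]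
    unfolding D .
  have K: "curv_inv (dist_matrix (bridge_edges E1 E2 u v)) = (\<chi> z. case z of
             Inl a \<Rightarrow> \<alpha> * K1 $ a - (if a = u then \<alpha> * k1 / 2 else 0)
           | Inr b \<Rightarrow> \<beta> * K2 $ b - (if b = v then \<beta> * k2 / 2 else 0))"
    using curv_inv_bridge_matrix[OF C2 diag n_def k_def[unfolded K_def] Z_def C1 \<alpha>_def \<beta>_def]
    unfolding D K_def[symmetric] .
  show ?thesis
    unfolding Let_def \<alpha>_def[symmetric] \<beta>_def[symmetric] K
    using inv C3 by (simp add: kuv_def field_simps)
qed

end
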